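(* Let $\theta < \sigma$ be two infinite cardinals such that $\theta$ is regular, $\sigma < \kappa$, and $d(\theta, \mu) < \kappa$ for every cardinal $\mu$ with $\theta \leq \mu < \sigma$. Let $J$ be a $\kappa$-complete ideal on $\kappa$ with $NS_\kappa|E^\kappa_\theta \subseteq J$ such that $\clubsuit_\kappa^{{\rm cof}/\sigma, *}[J]$ holds. Then $\clubsuit_\kappa^*[J]$ holds.
   Context: $\kappa$ is a regular uncountable cardinal. An ideal on $\kappa$ is a nonempty $J \subseteq P(\kappa)$ with $\kappa \notin J$, every bounded subset of $\kappa$ in $J$, $J$ closed under subsets and under unions of two members; $J^* = \{A \subseteq \kappa : \kappa\setminus A \in J\}$; $\kappa$-complete means closed under unions of fewer than $\kappa$ members. $E^\kappa_\theta$ is the set of limit ordinals below $\kappa$ of cofinality $\theta$; $NS_\kappa|E^\kappa_\theta = \{B : B \cap E^\kappa_\theta \text{ nonstationary}\}$. $acc(\kappa)$ is the set of nonzero limit ordinals below $\kappa$; $P_\sigma(X) = \{x \subseteq X : |x| < \sigma\}$; $[\kappa]^\kappa$ is the set of size-$\kappa$ subsets of $\kappa$. For cardinals $\tau \leq \mu$ with $\tau\ge1$, $\mu \ge\omega$, $d(\tau,\mu)$ is the least cardinality of $X \subseteq [\mu]^\tau$ such that every $e \in [\mu]^\tau$ has a subset in $X$. $\clubsuit_\kappa^{{\rm cof}/\sigma,*}[J]$: there are $B^i_\delta \in P_\sigma(\delta)$ for $i < \delta < \kappa$ such that for every $A \in [\kappa]^\kappa$, $\{\delta < \kappa : \exists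 i < \delta\,(\sup(A \cap B^i_\delta) = \delta)\} \in J^*$. $\clubsuit_\kappa^*[J]$: there are $s^i_\alpha \subseteq \alpha$ with $\sup s^i_\alpha = \alpha$ for $i < \alpha \in acc(\kappa)$ such that $\{\alpha < \kappa : \exists i < \alpha\,(s^i_\alpha \subseteq A)\} \in J^*$ for all $A \in [\kappa]^\kappa$. *)

theory Defs
  imports Main
begin

unbundle cardinal_syntax

text \<open>The regular uncountable cardinal kappa is represented by a cardinal order
  relation k (an initial well-order) on a type 'a; ordinals below kappa are the
  elements of Field k, and the ordinal delta is identified with the set
  underS k delta of its predecessors.\<close>

definition is_sup :: "'a rel \<Rightarrow> 'a set \<Rightarrow> 'a \<Rightarrow> bool" where
  "is_sup k X \<delta> \<longleftrightarrow> \<delta> \<in> Field k \<and> (\<forall>x\<in>X. (x, \<delta>) \<in> k) \<and>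
     (\<forall>\<beta>\<in>underS k \<delta>. \<exists>x\<in>X. \<beta> \<in> underS k x)"

definition is_limit :: "'a rel \<Rightarrow> 'a \<Rightarrow> bool" where
  "is_limit k \<delta> \<longleftrightarrow> \<delta> \<in> Field k \<and> underS k \<delta> \<noteq> {} \<and>
     (\<forall>\<beta>\<in>underS k \<delta>. \<exists>\<gamma>\<in>underS k \<delta>. \<beta> \<in> underS k \<gamma>)"

definition acc :: "'a rel \<Rightarrow> 'a set" where
  "acc k = {\<delta>. is_limit k \<delta>}"

definition cof_is :: "'a rel \<Rightarrow> 'a \<Rightarrow> 'b rel \<Rightarrow> bool" where
  "cof_is k \<delta> \<theta> \<longleftrightarrow>
     (\<exists>C. C \<subseteq> underS k \<delta> \<and> is_sup k C \<delta> \<and> (card_of C) =o \<theta>) \<and>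
     (\<forall>C. C \<subseteq> underS k \<delta> \<and> is_sup k C \<delta> \<longrightarrow> \<theta> \<le>o (card_of C))"

definition E_cof :: "'a rel \<Rightarrow> 'b rel \<Rightarrow> 'a set" where
  "E_cof k \<theta> = {\<delta>. is_limit k \<delta> \<and> cof_is k \<delta> \<theta>}"

definition unbounded :: "'a rel \<Rightarrow> 'a set \<Rightarrow> bool" where
  "unbounded k C \<longleftrightarrow> (\<forall>\<alpha>\<in>Field k. \<exists>c\<in>C. \<alpha> \<in> underS k c)"

definition closed_set :: "'a rel \<Rightarrow> 'a set \<Rightarrow> bool" where
  "closed_set k C \<longleftrightarrow> (\<forall>\<delta>. is_limit k \<delta> \<and> is_sup k (C \<inter> underS k \<delta>) \<delta> \<longrightarrow> \<delta> \<in> C)"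

definition club :: "'a rel \<Rightarrow> 'a set \<Rightarrow> bool" where
  "club k C \<longleftrightarrow> C \<subseteq> Field k \<and> closed_set k C \<and> unbounded k C"

definition stationary :: "'a rel \<Rightarrow> 'a set \<Rightarrow> bool" where
  "stationary k S \<longleftrightarrow> S \<subseteq> Field k \<and> (\<forall>C. club k C \<longrightarrow> S \<inter> C \<noteq> {})"

definition NS_restr :: "'a rel \<Rightarrow> 'a set \<Rightarrow> 'a set set" where
  "NS_restr k E = {B. B \<subseteq> Field k \<and> \<not> stationary k (B \<inter> E)}"

definition bounded_set :: "'a rel \<Rightarrow> 'a set \<Rightarrow> bool" where
  "bounded_set k A \<longleftrightarrow> (\<exists>\<alpha>\<in>Field k. A \<subseteq> underS k \<alpha>)"

definition is_ideal :: "'a rel \<Rightarrow> 'a set set \<Rightarrow> bool" where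
  "is_ideal k J \<longleftrightarrow> J \<noteq> {} \<and> J \<subseteq> Pow (Field k) \<and> Field k \<notin> J \<and>
     (\<forall>A. A \<subseteq> Field k \<and> bounded_set k A \<longrightarrow> A \<in> J) \<and>
     (\<forall>A\<in>J. \<forall>B. B \<subseteq> A \<longrightarrow> B \<in> J) \<and>
     (\<forall>A\<in>J. \<forall>B\<in>J. A \<union> B \<in> J)"

definition complete_ideal :: "'a rel \<Rightarrow> 'a set set \<Rightarrow> bool" where
  "complete_ideal k J \<longleftrightarrow> (\<forall>F. F \<subseteq> J \<and> (card_of F) <o k \<longrightarrow> \<Union>F \<in> J)"

definition dual_filter :: "'a rel \<Rightarrow> 'a set set \<Rightarrow> 'a set set" where
  "dual_filter k J = {A. A \<subseteq> Field k \<and> Field k - A \<in> J}"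

definition full_subsets :: "'a rel \<Rightarrow> 'a set set" where
  "full_subsets k = {A. A \<subseteq> Field k \<and> (card_of A) =o k}"

text \<open>d(tau, mu): least cardinality of a cofinal (under reverse inclusion)
  subfamily of [mu]^tau; mu is represented by a set M.\<close>
definition d_covers :: "'b rel \<Rightarrow> 'a set \<Rightarrow> 'a set set \<Rightarrow> bool" where
  "d_covers \<tau> M X \<longleftrightarrow> X \<subseteq> {e. e \<subseteq> M \<and> (card_of e) =o \<tau>} \<and>
     (\<forall>e. e \<subseteq> M \<and> (card_of e) =o \<tau> \<longrightarrow> (\<exists>x\<in>X. x \<subseteq> e))"

definition d_family :: "'b rel \<Rightarrow> 'a set \<Rightarrow> 'a set set" where
  "d_family \<tau> M = (SOME X. d_covers \<tau> M X \<and> (\<forall>Y. d_covers \<tau> M Y \<longrightarrow> (card_of X) \<le>o (card_of Y)))"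

definition d_card :: "'b rel \<Rightarrow> 'a set \<Rightarrow> 'a set rel" where
  "d_card \<tau> M = card_of (d_family \<tau> M)"

definition clubsuit_cof_star :: "'a rel \<Rightarrow> 'c rel \<Rightarrow> 'a set set \<Rightarrow> bool" where
  "clubsuit_cof_star k \<sigma> J \<longleftrightarrow> (\<exists>B :: 'a \<Rightarrow> 'a \<Rightarrow> 'a set.
     (\<forall>\<delta>\<in>Field k. \<forall>i\<in>underS k \<delta>. B i \<delta> \<subseteq> underS k \<delta> \<and> card_of (B i \<delta>) <o \<sigma>) \<and>
     (\<forall>A\<in>full_subsets k.
        {\<delta>\<in>Field k. \<exists>i\<in>underS k \<delta>. is_sup k (A \<inter> B i \<delta>) \<delta>} \<in> dual_filter k J))"

definition clubsuit_star :: "'a rel \<Rightarrow> 'a set set \<Rightarrow> bool" where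
  "clubsuit_star k J \<longleftrightarrow> (\<exists>s :: 'a \<Rightarrow> 'a \<Rightarrow> 'a set.
     (\<forall>\<alpha>\<in>acc k. \<forall>i\<in>underS k \<alpha>. s i \<alpha> \<subseteq> underS k \<alpha> \<and> is_sup k (s i \<alpha>) \<alpha>) \<and>
     (\<forall>A\<in>full_subsets k.
        {\<alpha>\<in>acc k. \<exists>i\<in>underS k \<alpha>. s i \<alpha> \<subseteq> A} \<in> dual_filter k J))"

end

theory Submission
  imports Defs
begin

(*
  Fix B witnessing the guessing principle with cofinal guesses of size < sigma.  Since kappa
  is regular and there are at most |sigma| < kappa cardinals below sigma, the families
  witnessing d(theta, mu) for theta <= mu < sigma all have size at most |eta| for a single
  eta < kappa.  For delta in E^kappa_theta above eta, collect the members of the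
  d(theta, |B^i_delta|)-families (i < delta) that are cofinal in delta: there are at most
  |delta| of them, so they can be listed as s^i_delta for i < delta.  If A meets B^i_delta in a
  cofinal set, the records (terms exceeding all earlier ones) of a cofinal theta-sequence in
  A \<inter> B^i_delta form a set of size theta all of whose bounded subsets have size < theta,
  because cf delta = theta.  So every subset of size theta of it is cofinal in delta, in
  particular the member of the d-family it contains.  As NS|E^kappa_theta is included in J,
  the ordinals outside E^kappa_theta, below eta, or not guessed by B form a set in J.
*)

lemma le_underS_trans:
  assumes "Well_order k" "(a, b) \<in> k" "b \<in> underS k c"
  shows "a \<in> underS k c"
  using assms wo_rel.TRANS[of k] wo_rel.ANTISYM[of k]
  unfolding wo_rel_def underS_def trans_def antisym_def by blast

lemma underS_le_trans:
  assumes "Well_order k" "a \<in> underS k b" "(b, c) \<in> k"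
  shows "a \<in> underS k c"
  using assms wo_rel.TRANS[of k] wo_rel.ANTISYM[of k]
  unfolding wo_rel_def underS_def trans_def antisym_def by blast

lemma le_imp_not_underS:
  assumes "Well_order k" "(a, b) \<in> k"
  shows "b \<notin> underS k a"
  using assms wo_rel.ANTISYM[of k] unfolding wo_rel_def underS_def antisym_def by blast

lemma le_or_underS:
  assumes "Well_order k" "a \<in> Field k" "b \<in> Field k"
  shows "(a, b) \<in> k \<or> b \<in> underS k a"
  using assms wo_rel.TOTALS[of k] unfolding wo_rel_def underS_def by blast

lemma ideal_Un:
  assumes "is_ideal k J" "X \<in> J" "Y \<in> J"
  shows "X \<union> Y \<in> J"
proof -
  have "\<forall>A\<in>J. \<forall>B\<in>J. A \<union> B \<in> J" using assms(1) unfolding is_ideal_def by (elim conjE)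
  then show ?thesis using assms(2,3) by blast
qed

lemma ideal_subset:
  assumes "is_ideal k J" "X \<in> J" "Y \<subseteq> X"
  shows "Y \<in> J"
proof -
  have "\<forall>A\<in>J. \<forall>B. B \<subseteq> A \<longrightarrow> B \<in> J" using assms(1) unfolding is_ideal_def by (elim conjE)
  then show ?thesis using assms(2,3) by simp
qed

lemma ideal_underS:
  assumes "is_ideal k J" "\<eta> \<in> Field k"
  shows "underS k \<eta> \<in> J"
proof -
  have "\<forall>A. A \<subseteq> Field k \<and> bounded_set k A \<longrightarrow> A \<in> J"
    using assms(1) unfolding is_ideal_def by (elim conjE)
  moreover have "bounded_set k (underS k \<eta>)" using assms(2) unfolding bounded_set_def by blast
  moreover have "underS k \<eta> \<subseteq> Field k" using underS_Field by fast
  ultimately show ?thesis by simp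
qed

lemma dual_filterI:
  assumes "is_ideal k J" "X \<in> J" "Field k - T \<subseteq> X" "T \<subseteq> Field k"
  shows "T \<in> dual_filter k J"
  using ideal_subset[OF assms(1-3)] assms(4) unfolding dual_filter_def by blast

lemma dual_filter_mono:
  assumes "is_ideal k J" "X \<in> dual_filter k J" "X \<subseteq> Y" "Y \<subseteq> Field k"
  shows "Y \<in> dual_filter k J"
proof (rule dual_filterI[OF assms(1) _ _ assms(4)])
  show "Field k - X \<in> J" using assms(2) by (simp add: dual_filter_def)
  show "Field k - Y \<subseteq> Field k - X" using assms(3) by blast
qed

lemma club_Field:
  assumes "Card_order k" "\<not> finite (Field k)"
  shows "club k (Field k)"
  unfolding club_def closed_set_def unbounded_def is_limit_def
  using infinite_Card_order_limit[OF assms] unfolding underS_def by blast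

lemma Field_diff_in_NS_restr:
  assumes "club k (Field k)"
  shows "Field k - E \<in> NS_restr k E"
  using assms unfolding NS_restr_def stationary_def by blast

section \<open>Cofinal families of subsets\<close>

lemma d_family_spec:
  "d_covers \<tau> M (d_family \<tau> M) \<and> (\<forall>Y. d_covers \<tau> M Y \<longrightarrow> |d_family \<tau> M| \<le>o |Y| )"
proof -
  let ?R = "{ |Y| | Y. d_covers \<tau> M Y}"
  have "d_covers \<tau> M {e. e \<subseteq> M \<and> |e| =o \<tau>}"
    unfolding d_covers_def by blast
  then have "?R \<noteq> {}" by blast
  moreover have "\<forall>r\<in>?R. Card_order r" using card_of_Card_order by blast
  ultimately obtain r where "r \<in> ?R" "\<forall>r'\<in>?R. r \<le>o r'"
    using exists_minim_Card_order[of ?R] by blast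
  then have "\<exists>X. d_covers \<tau> M X \<and> (\<forall>Y. d_covers \<tau> M Y \<longrightarrow> |X| \<le>o |Y| )" by blast
  then show ?thesis unfolding d_family_def by (rule someI_ex)
qed

lemma d_covers_d_family: "d_covers \<tau> M (d_family \<tau> M)"
  using d_family_spec by (rule conjunct1)

lemma card_of_d_family_minimal: "d_covers \<tau> M Y \<Longrightarrow> |d_family \<tau> M| \<le>o |Y|"
  using d_family_spec by blast

lemma d_family_subset: "x \<in> d_family \<tau> M \<Longrightarrow> x \<subseteq> M \<and> |x| =o \<tau>"
  using d_covers_d_family[of \<tau> M] unfolding d_covers_def by auto

lemma d_family_refines: "e \<subseteq> M \<Longrightarrow> |e| =o \<tau> \<Longrightarrow> \<exists>x\<in>d_family \<tau> M. x \<subseteq> e"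
  using d_covers_d_family[of \<tau> M] unfolding d_covers_def by simp

lemma d_covers_image:
  assumes f: "bij_betw f M M'" and X: "d_covers \<tau> M X"
  shows "d_covers \<tau> M' (image f ` X)"
  unfolding d_covers_def
proof (intro conjI allI impI subsetI)
  fix y assume "y \<in> image f ` X"
  then obtain x where x: "x \<in> X" "y = f ` x" by blast
  then have "x \<subseteq> M" "|x| =o \<tau>" using X unfolding d_covers_def by blast+
  then have "|y| =o \<tau>"
    using f x(2) by (metis bij_betw_subset card_of_ordIsoI ordIso_symmetric ordIso_transitive)
  moreover have "y \<subseteq> M'" using f x(2) \<open>x \<subseteq> M\<close> bij_betw_imp_surj_on by blast
  ultimately show "y \<in> {e. e \<subseteq> M' \<and> |e| =o \<tau>}" by blast
next
  fix e assume e: "e \<subseteq> M' \<and> |e| =o \<tau>"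
  let ?g = "inv_into M f"
  have g: "bij_betw ?g M' M" using f by (rule bij_betw_inv_into)
  have "|?g ` e| =o \<tau>"
    using g e by (metis bij_betw_subset card_of_ordIsoI ordIso_symmetric ordIso_transitive)
  moreover have "?g ` e \<subseteq> M" using g e bij_betw_imp_surj_on by blast
  ultimately obtain x where x: "x \<in> X" "x \<subseteq> ?g ` e" using X unfolding d_covers_def by blast
  have "f ` x \<subseteq> e"
  proof
    fix w assume "w \<in> f ` x"
    then obtain z where "z \<in> e" "w = f (?g z)" using x(2) by blast
    then show "w \<in> e" using e f by (metis bij_betw_imp_surj_on f_inv_into_f subsetD)
  qed
  then show "\<exists>y\<in>image f ` X. y \<subseteq> e" using x(1) by blast
qed

lemma card_of_d_family_ordLeq_if_ordIso:
  assumes "|M| =o |M'|"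
  shows "|d_family \<tau> M'| \<le>o |d_family \<tau> M|"
proof -
  obtain f where "bij_betw f M M'" using assms card_of_ordIso by blast
  then have "d_covers \<tau> M' (image f ` d_family \<tau> M)"
    using d_covers_d_family by (rule d_covers_image)
  then have "|d_family \<tau> M'| \<le>o |image f ` d_family \<tau> M|" by (rule card_of_d_family_minimal)
  then show ?thesis using card_of_image ordLeq_transitive by blast
qed

section \<open>Subsets of ordinals of cofinality theta\<close>

lemma cof_is_ordLeq:
  "cof_is k \<delta> \<theta> \<Longrightarrow> C \<subseteq> underS k \<delta> \<Longrightarrow> is_sup k C \<delta> \<Longrightarrow> \<theta> \<le>o |C|"
  unfolding cof_is_def by blast

lemma cof_is_infinite_underS:
  assumes "Card_order \<theta>" "cinfinite \<theta>" "cof_is k \<delta> \<theta>"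
  shows "\<not> finite (underS k \<delta>)"
proof -
  obtain C where C: "C \<subseteq> underS k \<delta>" "|C| =o \<theta>" using assms(3) unfolding cof_is_def by blast
  have "|C| =o |Field \<theta>|"
    using C(2) ordIso_symmetric[OF card_of_Field_ordIso[OF assms(1)]] by (rule ordIso_transitive)
  then have "\<not> finite C" using assms(2) card_of_ordIso_finite unfolding cinfinite_def by blast
  then show ?thesis using C(1) finite_subset by blast
qed

definition is_record :: "'b rel \<Rightarrow> 'a rel \<Rightarrow> ('b \<Rightarrow> 'a) \<Rightarrow> 'b \<Rightarrow> bool" where
  "is_record \<theta> k h \<alpha> \<longleftrightarrow> \<alpha> \<in> Field \<theta> \<and> (\<forall>\<beta>\<in>underS \<theta> \<alpha>. h \<beta> \<in> underS k (h \<alpha>))"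

lemma record_above:
  assumes w\<theta>: "Well_order \<theta>" and wk: "Well_order k"
    and h: "\<forall>\<alpha>\<in>Field \<theta>. h \<alpha> \<in> Field k" and \<gamma>: "\<gamma> \<in> Field k"
    and \<alpha>1: "\<alpha>1 \<in> Field \<theta>" "\<gamma> \<in> underS k (h \<alpha>1)"
  shows "\<exists>\<alpha>. is_record \<theta> k h \<alpha> \<and> \<gamma> \<in> underS k (h \<alpha>)"
proof -
  define P where "P = {\<alpha> \<in> Field \<theta>. \<gamma> \<in> underS k (h \<alpha>)}"
  have P: "P \<noteq> {}" "P \<subseteq> Field \<theta>" using \<alpha>1 unfolding P_def by blast+
  define \<alpha>0 where "\<alpha>0 = wo_rel.minim \<theta> P"
  have \<alpha>0: "\<alpha>0 \<in> P" using wo_rel.minim_in[OF _ P(2,1)] w\<theta> unfolding \<alpha>0_def wo_rel_def .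
  have least: "(\<alpha>0, \<alpha>) \<in> \<theta>" if "\<alpha> \<in> P" for \<alpha>
    using wo_rel.minim_least[OF _ P(2) that] w\<theta> unfolding \<alpha>0_def wo_rel_def .
  have "h \<beta> \<in> underS k (h \<alpha>0)" if \<beta>: "\<beta> \<in> underS \<theta> \<alpha>0" for \<beta>
  proof -
    have "\<beta> \<in> Field \<theta>" using \<beta> underS_Field by fast
    moreover have "\<beta> \<notin> P" using \<beta> least le_imp_not_underS[OF w\<theta>] by blast
    ultimately have "(h \<beta>, \<gamma>) \<in> k" using le_or_underS[OF wk] h \<gamma> unfolding P_def by blast
    then show ?thesis using le_underS_trans[OF wk] \<alpha>0 unfolding P_def by blast
  qed
  then show ?thesis using \<alpha>0 unfolding P_def is_record_def by blast
qed

lemma record_index_less: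
  assumes w\<theta>: "Well_order \<theta>" and wk: "Well_order k"
    and rec: "is_record \<theta> k h \<alpha>0" "is_record \<theta> k h \<alpha>" and less: "h \<alpha> \<in> underS k (h \<alpha>0)"
  shows "\<alpha> \<in> underS \<theta> \<alpha>0"
proof (rule ccontr)
  assume "\<alpha> \<notin> underS \<theta> \<alpha>0"
  then have "(\<alpha>0, \<alpha>) \<in> \<theta>" using le_or_underS[OF w\<theta>] rec unfolding is_record_def by blast
  then have "\<alpha>0 = \<alpha> \<or> \<alpha>0 \<in> underS \<theta> \<alpha>" unfolding underS_def by blast
  then show False
  proof
    assume "\<alpha>0 = \<alpha>"
    then show False using less underS_notIn by metis
  next
    assume "\<alpha>0 \<in> underS \<theta> \<alpha>"
    then have "(h \<alpha>0, h \<alpha>) \<in> k" using rec(2) unfolding is_record_def underS_def by blast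
    then show False using less le_imp_not_underS[OF wk] by blast
  qed
qed

lemma cofinal_sequence_in:
  assumes wk: "Well_order k" and \<theta>: "Card_order \<theta>" and cof: "cof_is k \<delta> \<theta>" and D: "is_sup k D \<delta>"
  shows "\<exists>h. (\<forall>\<alpha>\<in>Field \<theta>. h \<alpha> \<in> D) \<and> (\<forall>\<gamma>\<in>underS k \<delta>. \<exists>\<alpha>\<in>Field \<theta>. \<gamma> \<in> underS k (h \<alpha>))"
proof -
  obtain C where C: "C \<subseteq> underS k \<delta>" "is_sup k C \<delta>" "|C| =o \<theta>"
    using cof unfolding cof_is_def by blast
  have "|Field \<theta>| =o |C|"
    using card_of_Field_ordIso[OF \<theta>] C(3) ordIso_symmetric ordIso_transitive by blast
  then obtain g where "bij_betw g (Field \<theta>) C" using card_of_ordIso by blast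
  then have g: "g ` Field \<theta> = C" by (simp add: bij_betw_def)
  define h where "h \<alpha> = (SOME x. x \<in> D \<and> g \<alpha> \<in> underS k x)" for \<alpha>
  have h: "h \<alpha> \<in> D \<and> g \<alpha> \<in> underS k (h \<alpha>)" if "\<alpha> \<in> Field \<theta>" for \<alpha>
  proof -
    have "g \<alpha> \<in> underS k \<delta>" using g that C(1) by blast
    then have "\<exists>x. x \<in> D \<and> g \<alpha> \<in> underS k x" using D unfolding is_sup_def by blast
    then show ?thesis unfolding h_def by (rule someI_ex)
  qed
  have "\<exists>\<alpha>\<in>Field \<theta>. \<gamma> \<in> underS k (h \<alpha>)" if \<gamma>: "\<gamma> \<in> underS k \<delta>" for \<gamma>
  proof -
    obtain \<alpha> where \<alpha>: "\<alpha> \<in> Field \<theta>" "\<gamma> \<in> underS k (g \<alpha>)"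
      using C(2) g \<gamma> unfolding is_sup_def by blast
    moreover have "(g \<alpha>, h \<alpha>) \<in> k" using h[OF \<alpha>(1)] by (simp add: underS_def)
    ultimately show ?thesis using underS_le_trans[OF wk] by blast
  qed
  then show ?thesis using h by blast
qed

lemma card_of_records_below:
  assumes \<theta>: "Card_order \<theta>" and wk: "Well_order k"
    and \<alpha>0: "is_record \<theta> k h \<alpha>0" "\<gamma> \<in> underS k (h \<alpha>0)"
  shows "|{y\<in>h ` {\<alpha>. is_record \<theta> k h \<alpha>}. (y, \<gamma>) \<in> k}| <o \<theta>"
proof -
  have w\<theta>: "Well_order \<theta>" using \<theta> card_order_on_well_order_on by blast
  have "{y\<in>h ` {\<alpha>. is_record \<theta> k h \<alpha>}. (y, \<gamma>) \<in> k} \<subseteq> h ` underS \<theta> \<alpha>0"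
  proof
    fix y assume y: "y \<in> {y\<in>h ` {\<alpha>. is_record \<theta> k h \<alpha>}. (y, \<gamma>) \<in> k}"
    then obtain \<alpha> where \<alpha>: "is_record \<theta> k h \<alpha>" "y = h \<alpha>" "(h \<alpha>, \<gamma>) \<in> k" by blast
    then have "h \<alpha> \<in> underS k (h \<alpha>0)" using le_underS_trans[OF wk _ \<alpha>0(2)] by blast
    then show "y \<in> h ` underS \<theta> \<alpha>0" using record_index_less[OF w\<theta> wk \<alpha>0(1) \<alpha>(1)] \<alpha>(2) by blast
  qed
  then have "|{y\<in>h ` {\<alpha>. is_record \<theta> k h \<alpha>}. (y, \<gamma>) \<in> k}| \<le>o |h ` underS \<theta> \<alpha>0|"
    by (rule card_of_mono1)
  also have "|h ` underS \<theta> \<alpha>0| \<le>o |underS \<theta> \<alpha>0|" by (rule card_of_image)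
  also have "|underS \<theta> \<alpha>0| <o \<theta>"
    using card_of_underS[OF \<theta>] \<alpha>0(1) unfolding is_record_def by blast
  finally show ?thesis .
qed

lemma thin_cofinal_subset:
  assumes wk: "Well_order k" and \<theta>: "Card_order \<theta>" and cof: "cof_is k \<delta> \<theta>"
    and D: "D \<subseteq> underS k \<delta>" "is_sup k D \<delta>"
  shows "\<exists>R\<subseteq>D. |R| =o \<theta> \<and> (\<forall>\<gamma>\<in>underS k \<delta>. |{y\<in>R. (y, \<gamma>) \<in> k}| <o \<theta>)"
proof -
  have w\<theta>: "Well_order \<theta>" using \<theta> card_order_on_well_order_on by blast
  obtain h where hD: "\<forall>\<alpha>\<in>Field \<theta>. h \<alpha> \<in> D"
    and unbounded: "\<forall>\<gamma>\<in>underS k \<delta>. \<exists>\<alpha>\<in>Field \<theta>. \<gamma> \<in> underS k (h \<alpha>)"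
    using cofinal_sequence_in[OF wk \<theta> cof D(2)] by blast
  have hF: "\<forall>\<alpha>\<in>Field \<theta>. h \<alpha> \<in> Field k" using hD D(1) underS_Field by fast
  define R where "R = h ` {\<alpha>. is_record \<theta> k h \<alpha>}"
  have RD: "R \<subseteq> D" using hD unfolding R_def is_record_def by blast
  have above: "\<exists>\<alpha>. is_record \<theta> k h \<alpha> \<and> \<gamma> \<in> underS k (h \<alpha>)" if \<gamma>: "\<gamma> \<in> underS k \<delta>" for \<gamma>
    using unbounded record_above[OF w\<theta> wk hF] \<gamma> underS_Field by fast
  have "is_sup k R \<delta>"
    unfolding is_sup_def
  proof (intro conjI ballI)
    show "\<delta> \<in> Field k" using D(2) unfolding is_sup_def by blast
    show "(y, \<delta>) \<in> k" if "y \<in> R" for y using that RD D(1) unfolding underS_def by blast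
    show "\<exists>y\<in>R. \<beta> \<in> underS k y" if "\<beta> \<in> underS k \<delta>" for \<beta>
      using above[OF that] unfolding R_def by blast
  qed
  then have "\<theta> \<le>o |R|" using cof_is_ordLeq[OF cof] RD D(1) by blast
  moreover have "|R| \<le>o \<theta>"
  proof -
    have "R \<subseteq> h ` Field \<theta>" unfolding R_def is_record_def by blast
    then have "|R| \<le>o |h ` Field \<theta>|" by (rule card_of_mono1)
    also have "|h ` Field \<theta>| \<le>o |Field \<theta>|" by (rule card_of_image)
    also have "|Field \<theta>| =o \<theta>" using \<theta> by (rule card_of_Field_ordIso)
    finally show ?thesis .
  qed
  ultimately have "|R| =o \<theta>" by (simp add: ordIso_iff_ordLeq)
  moreover have "|{y\<in>R. (y, \<gamma>) \<in> k}| <o \<theta>" if "\<gamma> \<in> underS k \<delta>" for \<gamma>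
    using above[OF that] card_of_records_below[OF \<theta> wk] unfolding R_def by blast
  ultimately show ?thesis using RD by blast
qed

lemma is_sup_if_thin:
  assumes wk: "Well_order k" and \<delta>: "\<delta> \<in> Field k" and R: "R \<subseteq> underS k \<delta>"
    and thin: "\<forall>\<gamma>\<in>underS k \<delta>. |{y\<in>R. (y, \<gamma>) \<in> k}| <o \<theta>"
    and x: "x \<subseteq> R" "|x| =o \<theta>"
  shows "is_sup k x \<delta>"
  unfolding is_sup_def
proof (intro conjI ballI)
  show "\<delta> \<in> Field k" by (rule \<delta>)
  show "(y, \<delta>) \<in> k" if "y \<in> x" for y using that x(1) R by (auto simp: underS_def)
  fix \<beta> assume \<beta>: "\<beta> \<in> underS k \<delta>"
  show "\<exists>y\<in>x. \<beta> \<in> underS k y"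
  proof (rule ccontr)
    assume none: "\<not> (\<exists>y\<in>x. \<beta> \<in> underS k y)"
    have "x \<subseteq> {y\<in>R. (y, \<beta>) \<in> k}"
    proof
      fix y assume "y \<in> x"
      moreover have "y \<in> Field k" "\<beta> \<in> Field k"
        using \<open>y \<in> x\<close> x(1) R \<beta> underS_Field by fast+
      ultimately show "y \<in> {y\<in>R. (y, \<beta>) \<in> k}" using none x(1) le_or_underS[OF wk] by blast
    qed
    then have "|x| \<le>o |{y\<in>R. (y, \<beta>) \<in> k}|" by (rule card_of_mono1)
    also have "|{y\<in>R. (y, \<beta>) \<in> k}| <o \<theta>" using thin \<beta> by blast
    finally have "|x| <o \<theta>" .
    then show False using x(2) not_ordLess_ordIso by blast
  qed
qed

lemma d_family_cofinal_member:
  assumes wk: "Well_order k" and \<theta>: "Card_order \<theta>" and cof: "cof_is k \<delta> \<theta>"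
    and M: "M \<subseteq> underS k \<delta>" and AM: "is_sup k (A \<inter> M) \<delta>"
  shows "\<exists>x\<in>d_family \<theta> M. x \<subseteq> A \<and> is_sup k x \<delta>"
proof -
  obtain R where R: "R \<subseteq> A \<inter> M" "|R| =o \<theta>"
    and thin: "\<forall>\<gamma>\<in>underS k \<delta>. |{y\<in>R. (y, \<gamma>) \<in> k}| <o \<theta>"
    using thin_cofinal_subset[OF wk \<theta> cof _ AM] M by blast
  obtain x where x: "x \<in> d_family \<theta> M" "x \<subseteq> R"
    using d_family_refines[of R M \<theta>] R by blast
  have "is_sup k x \<delta>"
  proof (rule is_sup_if_thin[OF wk _ _ thin x(2)])
    show "\<delta> \<in> Field k" using AM unfolding is_sup_def by blast
    show "R \<subseteq> underS k \<delta>" using R(1) M by blast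
    show "|x| =o \<theta>" using d_family_subset[OF x(1)] by blast
  qed
  then show ?thesis using x R(1) by blast
qed

section \<open>A uniform bound below a regular cardinal\<close>

lemma card_of_ordLess_underS:
  assumes wk: "Well_order k" and X: "|X| <o k"
  shows "\<exists>b\<in>Field k. |X| \<le>o |underS k b|"
proof -
  obtain b where b: "b \<in> Field k" "|X| =o Restr k (underS k b)"
    using ordLess_iff_ordIso_Restr[OF wk card_of_Well_order[of X]] X by blast
  then have "|Field |X| | \<le>o |Field (Restr k (underS k b))|"
    using card_of_mono2 ordIso_iff_ordLeq by blast
  also have "|Field (Restr k (underS k b))| \<le>o |underS k b|"
    by (rule card_of_mono1[OF Field_Restr_subset])
  finally show ?thesis using b(1) by (auto simp only: Field_card_of)
qed

lemma regularCard_bounded: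
  assumes k: "Card_order k" "regularCard k" and K: "K \<subseteq> Field k" "|K| <o k"
  shows "\<exists>\<eta>\<in>Field k. \<forall>b\<in>K. (b, \<eta>) \<in> k"
proof -
  have wk: "Well_order k" using k(1) card_order_on_well_order_on by blast
  have "\<not> cofinal K k" using k(2) K not_ordLess_ordIso unfolding regularCard_def by blast
  then obtain \<eta> where \<eta>: "\<eta> \<in> Field k" "\<forall>b\<in>K. \<eta> = b \<or> (\<eta>, b) \<notin> k"
    unfolding cofinal_def by blast
  have "(b, \<eta>) \<in> k" if "b \<in> K" for b
    using \<eta> that K(1) le_or_underS[OF wk, of b \<eta>] wo_rel.REFL[of k]
    unfolding wo_rel_def underS_def refl_on_def by blast
  then show ?thesis using \<eta>(1) by blast
qed

lemma ordLess_representatives: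
  fixes \<sigma> :: "'c rel" and P :: "'x set \<Rightarrow> bool"
  assumes "Well_order \<sigma>"
  shows "\<exists>Ma. \<forall>M. P M \<and> |M| <o \<sigma> \<longrightarrow>
           (\<exists>a\<in>Field \<sigma>. P (Ma a) \<and> |Ma a| <o \<sigma> \<and> |M| =o |Ma a| )"
proof -
  define Q where "Q a M \<longleftrightarrow> P M \<and> |M| <o \<sigma> \<and> |M| =o Restr \<sigma> (underS \<sigma> a)" for a M
  define Ma where "Ma a = (SOME M. Q a M)" for a
  have "\<exists>a\<in>Field \<sigma>. P (Ma a) \<and> |Ma a| <o \<sigma> \<and> |M| =o |Ma a|" if M: "P M" "|M| <o \<sigma>" for M
  proof -
    obtain a where a: "a \<in> Field \<sigma>" "|M| =o Restr \<sigma> (underS \<sigma> a)"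
      using ordLess_iff_ordIso_Restr[OF assms card_of_Well_order[of M]] M(2) by blast
    then have "Q a M" using M unfolding Q_def by blast
    then have "Q a (Ma a)" unfolding Ma_def by (rule someI)
    then have "P (Ma a) \<and> |Ma a| <o \<sigma>" "|M| =o |Ma a|"
      using a(2) ordIso_symmetric ordIso_transitive unfolding Q_def by blast+
    then show ?thesis using a(1) by blast
  qed
  then show ?thesis by blast
qed

lemma d_family_uniform_bound:
  fixes k :: "'a rel" and \<theta> :: "'b rel" and \<sigma> :: "'c rel"
  assumes k: "Card_order k" "regularCard k" and \<sigma>: "Card_order \<sigma>" "\<sigma> <o k"
    and d_small: "\<forall>M :: 'x set. \<theta> \<le>o |M| \<and> |M| <o \<sigma> \<longrightarrow> d_card \<theta> M <o k"
  shows "\<exists>\<eta>\<in>Field k. \<forall>M :: 'x set. \<theta> \<le>o |M| \<and> |M| <o \<sigma> \<longrightarrow> |d_family \<theta> M| \<le>o |underS k \<eta>|"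
proof -
  have wk: "Well_order k" using k(1) card_order_on_well_order_on by blast
  have w\<sigma>: "Well_order \<sigma>" using \<sigma>(1) card_order_on_well_order_on by blast
  obtain Ma :: "'c \<Rightarrow> 'x set" where Ma: "\<forall>M :: 'x set. \<theta> \<le>o |M| \<and> |M| <o \<sigma> \<longrightarrow>
      (\<exists>a\<in>Field \<sigma>. \<theta> \<le>o |Ma a| \<and> |Ma a| <o \<sigma> \<and> |M| =o |Ma a| )"
    using ordLess_representatives[OF w\<sigma>, of "\<lambda>M :: 'x set. \<theta> \<le>o |M|"] by blast
  define I where "I = {a\<in>Field \<sigma>. \<theta> \<le>o |Ma a| \<and> |Ma a| <o \<sigma>}"
  have "\<exists>b\<in>Field k. |d_family \<theta> (Ma a)| \<le>o |underS k b|" if "a \<in> I" for a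
    using card_of_ordLess_underS[OF wk] d_small that unfolding I_def d_card_def by blast
  then obtain \<beta> where \<beta>: "\<forall>a\<in>I. \<beta> a \<in> Field k \<and> |d_family \<theta> (Ma a)| \<le>o |underS k (\<beta> a)|"
    by metis
  have "|\<beta> ` I| \<le>o |I|" by (rule card_of_image)
  also have "|I| \<le>o |Field \<sigma>|" unfolding I_def by (rule card_of_mono1) blast
  also have "|Field \<sigma>| =o \<sigma>" using \<sigma>(1) by (rule card_of_Field_ordIso)
  also have "\<sigma> <o k" by (rule \<sigma>(2))
  finally obtain \<eta> where \<eta>: "\<eta> \<in> Field k" "\<forall>a\<in>I. (\<beta> a, \<eta>) \<in> k"
    using regularCard_bounded[OF k, of "\<beta> ` I"] \<beta> by blast
  have "|d_family \<theta> M| \<le>o |underS k \<eta>|" if M: "\<theta> \<le>o |M|" "|M| <o \<sigma>" for M :: "'x set"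
  proof -
    obtain a where a: "a \<in> I" "|Ma a| =o |M|"
      using Ma M ordIso_symmetric unfolding I_def by blast
    have "|d_family \<theta> M| \<le>o |d_family \<theta> (Ma a)|"
      using a(2) by (rule card_of_d_family_ordLeq_if_ordIso)
    also have "|d_family \<theta> (Ma a)| \<le>o |underS k (\<beta> a)|" using \<beta> a(1) by blast
    also have "|underS k (\<beta> a)| \<le>o |underS k \<eta>|"
      using \<eta> a(1) underS_le_trans[OF wk] by (intro card_of_mono1) blast
    finally show ?thesis .
  qed
  then show ?thesis using \<eta>(1) by blast
qed

section \<open>Guessing families\<close>

lemma is_sup_underS_if_limit: "is_limit k \<delta> \<Longrightarrow> is_sup k (underS k \<delta>) \<delta>"
  unfolding is_limit_def is_sup_def underS_def by blast

lemma clubsuit_star_if_small_guess_families: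
  fixes S :: "'a \<Rightarrow> 'a set set"
  assumes J: "is_ideal k J"
    and cofinal: "\<forall>\<alpha>\<in>acc k. \<forall>x\<in>S \<alpha>. x \<subseteq> underS k \<alpha> \<and> is_sup k x \<alpha>"
    and small: "\<forall>\<alpha>\<in>acc k. |S \<alpha>| \<le>o |underS k \<alpha>|"
    and guess: "\<forall>A\<in>full_subsets k. {\<alpha>\<in>acc k. \<exists>x\<in>S \<alpha>. x \<subseteq> A} \<in> dual_filter k J"
  shows "clubsuit_star k J"
proof -
  define s where "s i \<alpha> = (if S \<alpha> = {} then underS k \<alpha> else (SOME g. g ` underS k \<alpha> = S \<alpha>) i)"
    for i \<alpha>
  have enum: "(\<lambda>i. s i \<alpha>) ` underS k \<alpha> = S \<alpha>" if "\<alpha> \<in> acc k" "S \<alpha> \<noteq> {}" for \<alpha>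
  proof -
    have "\<exists>g. g ` underS k \<alpha> = S \<alpha>"
      using card_of_ordLeq2[OF that(2)] small that(1) by blast
    then have "(SOME g. g ` underS k \<alpha> = S \<alpha>) ` underS k \<alpha> = S \<alpha>" by (rule someI_ex)
    then show ?thesis using that(2) unfolding s_def by simp
  qed
  have "s i \<alpha> \<subseteq> underS k \<alpha> \<and> is_sup k (s i \<alpha>) \<alpha>" if "\<alpha> \<in> acc k" "i \<in> underS k \<alpha>" for \<alpha> i
  proof (cases "S \<alpha> = {}")
    case True
    then show ?thesis using is_sup_underS_if_limit that(1) unfolding s_def acc_def by simp
  next
    case False
    then have "s i \<alpha> \<in> S \<alpha>" using enum[OF that(1) False] that(2) by blast
    then show ?thesis using cofinal that(1) by blast
  qed
  moreover have "{\<alpha>\<in>acc k. \<exists>i\<in>underS k \<alpha>. s i \<alpha> \<subseteq> A} \<in> dual_filter k J"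
    if A: "A \<in> full_subsets k" for A
  proof (rule dual_filter_mono[OF J guess[rule_format, OF A]])
    show "{\<alpha>\<in>acc k. \<exists>x\<in>S \<alpha>. x \<subseteq> A} \<subseteq> {\<alpha>\<in>acc k. \<exists>i\<in>underS k \<alpha>. s i \<alpha> \<subseteq> A}"
    proof
      fix \<alpha> assume "\<alpha> \<in> {\<alpha>\<in>acc k. \<exists>x\<in>S \<alpha>. x \<subseteq> A}"
      then obtain x where \<alpha>: "\<alpha> \<in> acc k" and x: "x \<in> S \<alpha>" "x \<subseteq> A" by blast
      then have "x \<in> (\<lambda>i. s i \<alpha>) ` underS k \<alpha>" using enum[OF \<alpha>] by blast
      then show "\<alpha> \<in> {\<alpha>\<in>acc k. \<exists>i\<in>underS k \<alpha>. s i \<alpha> \<subseteq> A}" using x(2) \<alpha> by blast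
    qed
    show "{\<alpha>\<in>acc k. \<exists>i\<in>underS k \<alpha>. s i \<alpha> \<subseteq> A} \<subseteq> Field k"
      unfolding acc_def is_limit_def by blast
  qed
  ultimately show ?thesis unfolding clubsuit_star_def by blast
qed

definition guess_family :: "'a rel \<Rightarrow> 'b rel \<Rightarrow> ('a \<Rightarrow> 'a \<Rightarrow> 'a set) \<Rightarrow> 'a \<Rightarrow> 'a \<Rightarrow> 'a set set" where
  "guess_family k \<theta> B \<eta> \<delta> =
     (if \<delta> \<in> E_cof k \<theta> \<and> (\<eta>, \<delta>) \<in> k
      then {x. x \<subseteq> underS k \<delta> \<and> is_sup k x \<delta> \<and>
                (\<exists>i\<in>underS k \<delta>. \<theta> \<le>o |B i \<delta>| \<and> x \<in> d_family \<theta> (B i \<delta>))}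
      else {})"

lemma guess_family_cofinal:
  "x \<in> guess_family k \<theta> B \<eta> \<delta> \<Longrightarrow> x \<subseteq> underS k \<delta> \<and> is_sup k x \<delta>"
  unfolding guess_family_def by (auto split: if_splits)

lemma card_of_guess_family:
  assumes wk: "Well_order k" and \<theta>: "Card_order \<theta>" "cinfinite \<theta>"
    and bound: "\<forall>i\<in>underS k \<delta>. \<theta> \<le>o |B i \<delta>| \<longrightarrow> |d_family \<theta> (B i \<delta>)| \<le>o |underS k \<eta>|"
  shows "|guess_family k \<theta> B \<eta> \<delta>| \<le>o |underS k \<delta>|"
proof (cases "\<delta> \<in> E_cof k \<theta> \<and> (\<eta>, \<delta>) \<in> k")
  case True
  define I where "I = {i\<in>underS k \<delta>. \<theta> \<le>o |B i \<delta>|}"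
  have "guess_family k \<theta> B \<eta> \<delta> \<subseteq> (\<Union>i\<in>I. d_family \<theta> (B i \<delta>))"
    using True unfolding guess_family_def I_def by auto
  then have "|guess_family k \<theta> B \<eta> \<delta>| \<le>o |\<Union>i\<in>I. d_family \<theta> (B i \<delta>)|"
    by (rule card_of_mono1)
  also have "|\<Union>i\<in>I. d_family \<theta> (B i \<delta>)| \<le>o |underS k \<delta>|"
  proof (rule card_of_UNION_ordLeq_infinite)
    show "\<not> finite (underS k \<delta>)"
      using cof_is_infinite_underS[OF \<theta>, of k \<delta>] True by (simp add: E_cof_def)
    show "|I| \<le>o |underS k \<delta>|" unfolding I_def by (rule card_of_mono1) blast
    have "|underS k \<eta>| \<le>o |underS k \<delta>|"
      using True underS_le_trans[OF wk] by (intro card_of_mono1) blast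
    then show "\<forall>i\<in>I. |d_family \<theta> (B i \<delta>)| \<le>o |underS k \<delta>|"
      using bound ordLeq_transitive unfolding I_def by blast
  qed
  finally show ?thesis .
next
  case False
  then have "guess_family k \<theta> B \<eta> \<delta> = {}" unfolding guess_family_def by (simp only: if_False)
  then show ?thesis by (simp add: card_of_empty)
qed

lemma guess_family_guesses:
  assumes wk: "Well_order k" and \<theta>: "Card_order \<theta>"
    and \<delta>: "\<delta> \<in> E_cof k \<theta>" "(\<eta>, \<delta>) \<in> k" and i: "i \<in> underS k \<delta>"
    and B: "B i \<delta> \<subseteq> underS k \<delta>" and A: "is_sup k (A \<inter> B i \<delta>) \<delta>"
  shows "\<exists>x\<in>guess_family k \<theta> B \<eta> \<delta>. x \<subseteq> A"
proof -
  have cof: "cof_is k \<delta> \<theta>" using \<delta>(1) unfolding E_cof_def by blast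
  obtain x where x: "x \<in> d_family \<theta> (B i \<delta>)" "x \<subseteq> A" "is_sup k x \<delta>"
    using d_family_cofinal_member[OF wk \<theta> cof B A] by blast
  have "x \<subseteq> B i \<delta>" "|x| =o \<theta>" using d_family_subset[OF x(1)] by blast+
  then have "\<theta> \<le>o |B i \<delta>|"
    using ordIso_ordLeq_trans[OF ordIso_symmetric card_of_mono1] by blast
  then have "x \<in> guess_family k \<theta> B \<eta> \<delta>"
    using \<delta> i B x(1,3) \<open>x \<subseteq> B i \<delta>\<close> unfolding guess_family_def by auto
  then show ?thesis using x(2) by blast
qed

lemma guess_family_dual_filter:
  assumes wk: "Well_order k" and \<theta>: "Card_order \<theta>" and J: "is_ideal k J"
    and E: "Field k - E_cof k \<theta> \<in> J" and \<eta>: "\<eta> \<in> Field k"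
    and B: "\<forall>\<delta>\<in>Field k. \<forall>i\<in>underS k \<delta>. B i \<delta> \<subseteq> underS k \<delta>"
    and G: "{\<delta>\<in>Field k. \<exists>i\<in>underS k \<delta>. is_sup k (A \<inter> B i \<delta>) \<delta>} \<in> dual_filter k J"
  shows "{\<alpha>\<in>acc k. \<exists>x\<in>guess_family k \<theta> B \<eta> \<alpha>. x \<subseteq> A} \<in> dual_filter k J"
proof (rule dual_filterI[OF J])
  let ?G = "{\<delta>\<in>Field k. \<exists>i\<in>underS k \<delta>. is_sup k (A \<inter> B i \<delta>) \<delta>}"
  have "Field k - ?G \<in> J" using G by (simp add: dual_filter_def)
  then show "(Field k - ?G) \<union> (Field k - E_cof k \<theta>) \<union> underS k \<eta> \<in> J"
    by (intro ideal_Un[OF J] E ideal_underS[OF J \<eta>])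
  show "{\<alpha>\<in>acc k. \<exists>x\<in>guess_family k \<theta> B \<eta> \<alpha>. x \<subseteq> A} \<subseteq> Field k"
    unfolding acc_def is_limit_def by blast
  show "Field k - {\<alpha>\<in>acc k. \<exists>x\<in>guess_family k \<theta> B \<eta> \<alpha>. x \<subseteq> A}
      \<subseteq> (Field k - ?G) \<union> (Field k - E_cof k \<theta>) \<union> underS k \<eta>"
  proof
    fix \<delta> assume \<delta>: "\<delta> \<in> Field k - {\<alpha>\<in>acc k. \<exists>x\<in>guess_family k \<theta> B \<eta> \<alpha>. x \<subseteq> A}"
    show "\<delta> \<in> (Field k - ?G) \<union> (Field k - E_cof k \<theta>) \<union> underS k \<eta>"
    proof (rule ccontr)
      assume "\<delta> \<notin> (Field k - ?G) \<union> (Field k - E_cof k \<theta>) \<union> underS k \<eta>"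
      then have G\<delta>: "\<delta> \<in> ?G" and E\<delta>: "\<delta> \<in> E_cof k \<theta>" and "\<delta> \<notin> underS k \<eta>"
        using \<delta> by simp_all
      then have \<eta>\<delta>: "(\<eta>, \<delta>) \<in> k" using le_or_underS[OF wk \<eta>, of \<delta>] \<delta> by simp
      obtain i where i: "i \<in> underS k \<delta>" "is_sup k (A \<inter> B i \<delta>) \<delta>" using G\<delta> by blast
      then have "B i \<delta> \<subseteq> underS k \<delta>" using B \<delta> by simp
      then have "\<exists>x\<in>guess_family k \<theta> B \<eta> \<delta>. x \<subseteq> A"
        using guess_family_guesses[OF wk \<theta> E\<delta> \<eta>\<delta> i(1)] i(2) by simp
      moreover have "\<delta> \<in> acc k" using E\<delta> by (simp add: E_cof_def acc_def)
      ultimately show False using \<delta> by simp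
    qed
  qed
qed

theorem proposition3p26:
  fixes k :: "'a rel" and \<theta> :: "'b rel" and \<sigma> :: "'c rel" and J :: "'a set set"
  assumes k_card: "Card_order k" and k_reg: "regularCard k" and k_unc: "natLeq <o k"
    and \<theta>_card: "Card_order \<theta>" and \<theta>_inf: "cinfinite \<theta>" and \<theta>_reg: "regularCard \<theta>"
    and \<sigma>_card: "Card_order \<sigma>" and \<sigma>_inf: "cinfinite \<sigma>"
    and \<theta>\<sigma>: "\<theta> <o \<sigma>" and \<sigma>k: "\<sigma> <o k"
    and d_small: "\<forall>M :: 'a set. \<theta> \<le>o (card_of M) \<and> (card_of M) <o \<sigma> \<longrightarrow> d_card \<theta> M <o k"
    and J_ideal: "is_ideal k J" and J_complete: "complete_ideal k J"
    and NS_J: "NS_restr k (E_cof k \<theta>) \<subseteq> J"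
    and club_cof: "clubsuit_cof_star k \<sigma> J"
  shows "clubsuit_star k J"
proof -
  have wk: "Well_order k" using k_card card_order_on_well_order_on by blast
  have "natLeq \<le>o |Field k|"
    using ordLess_imp_ordLeq[OF k_unc] ordIso_symmetric[OF card_of_Field_ordIso[OF k_card]]
    by (rule ordLeq_ordIso_trans)
  then have "club k (Field k)" using club_Field[OF k_card] infinite_iff_natLeq_ordLeq by blast
  then have E: "Field k - E_cof k \<theta> \<in> J" using NS_J Field_diff_in_NS_restr by blast
  obtain B :: "'a \<Rightarrow> 'a \<Rightarrow> 'a set" where
    B_small: "\<forall>\<delta>\<in>Field k. \<forall>i\<in>underS k \<delta>. B i \<delta> \<subseteq> underS k \<delta> \<and> |B i \<delta>| <o \<sigma>" and
    B_guess: "\<forall>A\<in>full_subsets k.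
      {\<delta>\<in>Field k. \<exists>i\<in>underS k \<delta>. is_sup k (A \<inter> B i \<delta>) \<delta>} \<in> dual_filter k J"
    using club_cof unfolding clubsuit_cof_star_def by blast
  obtain \<eta> where \<eta>: "\<eta> \<in> Field k"
    and d_bound: "\<forall>M :: 'a set. \<theta> \<le>o |M| \<and> |M| <o \<sigma> \<longrightarrow> |d_family \<theta> M| \<le>o |underS k \<eta>|"
    using d_family_uniform_bound[OF k_card k_reg \<sigma>_card \<sigma>k d_small] by blast
  show ?thesis
  proof (rule clubsuit_star_if_small_guess_families[OF J_ideal]; intro ballI)
    show "x \<subseteq> underS k \<alpha> \<and> is_sup k x \<alpha>" if "x \<in> guess_family k \<theta> B \<eta> \<alpha>" for \<alpha> x
      using that by (rule guess_family_cofinal)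
    show "|guess_family k \<theta> B \<eta> \<alpha>| \<le>o |underS k \<alpha>|" if "\<alpha> \<in> acc k" for \<alpha>
      using card_of_guess_family[OF wk \<theta>_card \<theta>_inf] B_small d_bound that
      by (simp add: acc_def is_limit_def)
    show "{\<alpha>\<in>acc k. \<exists>x\<in>guess_family k \<theta> B \<eta> \<alpha>. x \<subseteq> A} \<in> dual_filter k J"
      if "A \<in> full_subsets k" for A
      using guess_family_dual_filter[OF wk \<theta>_card J_ideal E \<eta>] B_small B_guess that by simp
  qed
qed

end
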